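(* Let $P$ be a finite lattice and $f\in\mathcal{L}_P$. Let $\check{\mathcal{S}}_f$ be the set of minimal elements of $\mathcal{S}_f=\{s\in\mathcal{L}_P:f+s=1\}$ and $\hat{\mathcal{W}}_f$ the set of maximal elements of $\mathcal{W}_f=\{w\in\mathcal{L}_P:w\le f,\ w\text{ prime}\}$. Then the operator $\neg$ restricts to a bijection from $\check{\mathcal{S}}_f$ onto $\hat{\mathcal{W}}_f$.
   Context: $P$ is a finite lattice with greatest element $\hat p$. $\mathcal{L}_P$ is the set of maps $f:P\to P$ satisfying (A.1) $a\le f(a)$; (A.2) $a\le b\Rightarrow f(a)\le f(b)$; (A.3) $f(f(a))=f(a)$, ordered pointwise; it is a lattice with join $+$ and greatest element $1:a\mapsto\hat p$. $\Phi f=\{a:f(a)=a\}$. $f$ is prime if $P\setminus\Phi f$ is closed under $\wedge$; for prime $f$, $\neg f$ is the (prime) element of $\mathcal{L}_P$ with $\Phi(\neg f)=(P\setminus\Phi f)\cup\{\hat p\}$. (Minimal elements of $\mathcal{S}_f$ are prime, so $\neg$ is defined on them.) *)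

theory Defs
  imports Main
begin

text \<open>P is modelled as a finite type with a bounded lattice structure; top is the
greatest element. Maps P to P are ordered pointwise (Isabelle's function order).\<close>

definition closure_ops :: "('a::{finite,bounded_lattice} \<Rightarrow> 'a) set" where
  "closure_ops = {f. (\<forall>a. a \<le> f a) \<and> (\<forall>a b. a \<le> b \<longrightarrow> f a \<le> f b) \<and> (\<forall>a. f (f a) = f a)}"

definition fixpts :: "('a \<Rightarrow> 'a) \<Rightarrow> 'a set" where
  "fixpts f = {a. f a = a}"

definition one_op :: "'a::{finite,bounded_lattice} \<Rightarrow> 'a" where
  "one_op = (\<lambda>a. top)"

definition clo_join :: "('a::{finite,bounded_lattice} \<Rightarrow> 'a) \<Rightarrow> ('a \<Rightarrow> 'a) \<Rightarrow> ('a \<Rightarrow> 'a)" where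
  "clo_join f g = (LEAST h. h \<in> closure_ops \<and> f \<le> h \<and> g \<le> h)"

definition prime_op :: "('a::{finite,bounded_lattice} \<Rightarrow> 'a) \<Rightarrow> bool" where
  "prime_op f \<longleftrightarrow> (\<forall>a b. a \<notin> fixpts f \<longrightarrow> b \<notin> fixpts f \<longrightarrow> inf a b \<notin> fixpts f)"

definition neg_op :: "('a::{finite,bounded_lattice} \<Rightarrow> 'a) \<Rightarrow> ('a \<Rightarrow> 'a)" where
  "neg_op f = (THE g. g \<in> closure_ops \<and> fixpts g = (UNIV - fixpts f) \<union> {top})"

definition S_set :: "('a::{finite,bounded_lattice} \<Rightarrow> 'a) \<Rightarrow> ('a \<Rightarrow> 'a) set" where
  "S_set f = {s \<in> closure_ops. clo_join f s = one_op}"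

definition W_set :: "('a::{finite,bounded_lattice} \<Rightarrow> 'a) \<Rightarrow> ('a \<Rightarrow> 'a) set" where
  "W_set f = {w \<in> closure_ops. w \<le> f \<and> prime_op w}"

definition minimals :: "('b::order) set \<Rightarrow> 'b set" where
  "minimals A = {x \<in> A. \<forall>y\<in>A. y \<le> x \<longrightarrow> y = x}"

definition maximals :: "('b::order) set \<Rightarrow> 'b set" where
  "maximals A = {x \<in> A. \<forall>y\<in>A. x \<le> y \<longrightarrow> y = x}"

end

theory Submission
  imports Defs
begin

text \<open>A closure operator on the finite lattice P is determined by its set of fixed points, which
is a Moore family (it contains the top and is closed under meets), and f \<le> g iff the fixed
points of g lie among those of f. In these terms f + s = 1 says that the two Moore families
meet only in the top, and \<not> swaps a prime Moore family with its complement (plus the top).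
So, on prime elements, \<not> is an order-reversing involution carrying S_f onto W_f; it therefore
maps the minimal prime elements of S_f onto the maximal elements of W_f. It remains to see
that the minimal elements of S_f are prime: if a, b are not fixed by a minimal s but a \<sqinter> b is,
by minimality, adjoining a (resp. b) to the fixed points of s produces a non-top fixed point a \<sqinter> m of f
(resp. b \<sqinter> m'), and then a \<sqinter> m \<sqinter> b \<sqinter> m' would be a non-top common fixed point of f and s.\<close>

lemma bij_betw_minimals_maximals:
  fixes g :: "'a::order \<Rightarrow> 'b::order"
  assumes bij: "bij_betw g A B"
    and antitone: "\<And>x y. x \<in> A \<Longrightarrow> y \<in> A \<Longrightarrow> x \<le> y \<longleftrightarrow> g y \<le> g x"
  shows "bij_betw g (minimals A) (maximals B)"
proof -
  have maps_to: "g x \<in> maximals B" if x: "x \<in> minimals A" for x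
  proof -
    have "z = g x" if "z \<in> B" "g x \<le> z" for z
    proof -
      obtain y where "y \<in> A" "z = g y" using bij \<open>z \<in> B\<close> by (auto simp: bij_betw_def)
      then show ?thesis using x antitone that(2) by (auto simp: minimals_def)
    qed
    then show ?thesis using x bij by (auto simp: minimals_def maximals_def bij_betw_def)
  qed
  have onto: "z \<in> g ` minimals A" if z: "z \<in> maximals B" for z
  proof -
    obtain x where x: "x \<in> A" "z = g x" using bij z by (auto simp: bij_betw_def maximals_def)
    have "y = x" if "y \<in> A" "y \<le> x" for y
    proof -
      have "g y = g x" using z x that antitone bij by (auto simp: maximals_def bij_betw_def)
      then show ?thesis using bij x that by (auto simp: bij_betw_def inj_on_def)
    qed
    then show ?thesis using x by (auto simp: minimals_def)
  qed
  have "inj_on g (minimals A)"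
    using bij by (auto simp: bij_betw_def minimals_def intro: inj_on_subset)
  then show ?thesis using maps_to onto by (auto simp: bij_betw_def)
qed

lemma minimals_eq_if_minimals_subset:
  fixes A B :: "'a::order set"
  assumes "finite B" "A \<subseteq> B" "minimals B \<subseteq> A"
  shows "minimals A = minimals B"
proof
  show "minimals B \<subseteq> minimals A" using assms(2,3) by (auto simp: minimals_def)
  show "minimals A \<subseteq> minimals B"
  proof
    fix x assume x: "x \<in> minimals A"
    have "y = x" if "y \<in> B" "y \<le> x" for y
    proof -
      obtain z where "z \<in> B" "z \<le> y" "\<forall>w\<in>B. w \<le> z \<longrightarrow> z = w"
        using finite_has_minimal2[OF assms(1) \<open>y \<in> B\<close>] by blast
      then have "z \<in> minimals B" "z \<le> y" by (auto simp: minimals_def)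
      then have "z = x" using x assms(3) \<open>y \<le> x\<close> by (auto simp: minimals_def)
      then show ?thesis using \<open>z \<le> y\<close> \<open>y \<le> x\<close> by simp
    qed
    then show "x \<in> minimals B" using x assms(2) by (auto simp: minimals_def)
  qed
qed

definition Moore_family :: "'a::bounded_lattice set \<Rightarrow> bool" where
  "Moore_family M \<longleftrightarrow> top \<in> M \<and> (\<forall>a\<in>M. \<forall>b\<in>M. inf a b \<in> M)"

definition Moore_closure :: "'a::{finite,bounded_lattice} set \<Rightarrow> 'a \<Rightarrow> 'a" where
  "Moore_closure M a = Inf_fin {m \<in> M. a \<le> m}"

lemma closure_opsD:
  assumes "f \<in> closure_ops"
  shows "a \<le> f a" "a \<le> b \<Longrightarrow> f a \<le> f b" "f (f a) = f a"
  using assms by (auto simp: closure_ops_def)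

lemma fixpts_closure_op_Moore:
  assumes f: "f \<in> closure_ops"
  shows "Moore_family (fixpts f)"
proof -
  have "f top = top" using closure_opsD(1)[OF f, of top] by (simp add: top_unique)
  moreover have "f (inf a b) = inf a b" if "f a = a" "f b = b" for a b
  proof -
    have "f (inf a b) \<le> inf a b" using closure_opsD(2)[OF f] that by (metis inf_le1 inf_le2 le_inf_iff)
    then show ?thesis using closure_opsD(1)[OF f] by (simp add: antisym)
  qed
  ultimately show ?thesis by (auto simp: Moore_family_def fixpts_def)
qed

lemma top_in_fixpts: "f \<in> closure_ops \<Longrightarrow> top \<in> fixpts f"
  using fixpts_closure_op_Moore by (auto simp: Moore_family_def)

lemma closure_ops_le_iff_fixpts:
  assumes f: "f \<in> closure_ops" and g: "g \<in> closure_ops"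
  shows "f \<le> g \<longleftrightarrow> fixpts g \<subseteq> fixpts f"
proof
  assume "f \<le> g"
  show "fixpts g \<subseteq> fixpts f"
  proof
    fix a assume "a \<in> fixpts g"
    then have "f a \<le> a" using le_funD[OF \<open>f \<le> g\<close>, of a] by (simp add: fixpts_def)
    then show "a \<in> fixpts f" using closure_opsD(1)[OF f, of a] by (simp add: fixpts_def antisym)
  qed
next
  assume fix_sub: "fixpts g \<subseteq> fixpts f"
  show "f \<le> g"
  proof (rule le_funI)
    fix a
    have "f (g a) = g a" using fix_sub closure_opsD(3)[OF g] by (auto simp: fixpts_def)
    then show "f a \<le> g a" using closure_opsD(2)[OF f closure_opsD(1)[OF g, of a]] by simp
  qed
qed

lemma closure_ops_eqI:
  "f \<in> closure_ops \<Longrightarrow> g \<in> closure_ops \<Longrightarrow> fixpts f = fixpts g \<Longrightarrow> f = g"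
  using closure_ops_le_iff_fixpts by (metis antisym order_refl)

lemma Inf_fin_in_Moore_family:
  assumes "Moore_family M" "finite A" "A \<noteq> {}" "A \<subseteq> M"
  shows "Inf_fin A \<in> M"
  using assms(2-4)
proof (induction A rule: finite_ne_induct)
  case (insert x A)
  then show ?case using assms(1) by (simp add: Moore_family_def)
qed simp

lemma Moore_closure:
  fixes M :: "'a::{finite,bounded_lattice} set"
  assumes M: "Moore_family M"
  shows "Moore_closure M \<in> closure_ops" "fixpts (Moore_closure M) = M"
proof -
  have ne: "{m \<in> M. a \<le> m} \<noteq> {}" for a using M by (auto simp: Moore_family_def)
  have in_M: "Moore_closure M a \<in> M" for a
    unfolding Moore_closure_def by (rule Inf_fin_in_Moore_family[OF M _ ne]) auto
  have extensive: "a \<le> Moore_closure M a" for a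
    unfolding Moore_closure_def by (rule Inf_fin.boundedI[OF _ ne]) auto
  have least: "Moore_closure M a \<le> m" if "m \<in> M" "a \<le> m" for a m
    unfolding Moore_closure_def using that by (intro Inf_fin.coboundedI) auto
  have fixes_M: "Moore_closure M m = m" if "m \<in> M" for m
    using least[OF that order_refl] extensive[of m] by (rule antisym)
  have "Moore_closure M a \<le> Moore_closure M b" if "a \<le> b" for a b
    using least[OF in_M] order_trans[OF that extensive] by blast
  then show "Moore_closure M \<in> closure_ops"
    using extensive fixes_M[OF in_M] by (auto simp: closure_ops_def)
  show "fixpts (Moore_closure M) = M"
    using in_M fixes_M by (auto simp: fixpts_def) (metis in_M)
qed

lemma closure_op_with_fixpts_unique:
  "Moore_family M \<Longrightarrow> \<exists>!g. g \<in> closure_ops \<and> fixpts g = M"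
  using Moore_closure closure_ops_eqI by metis

lemma Moore_family_fixpts_inter:
  assumes "f \<in> closure_ops" "g \<in> closure_ops"
  shows "Moore_family (fixpts f \<inter> fixpts g)"
  using fixpts_closure_op_Moore[OF assms(1)] fixpts_closure_op_Moore[OF assms(2)]
  by (auto simp: Moore_family_def)

lemma clo_join_eq_Moore_closure:
  assumes f: "f \<in> closure_ops" and g: "g \<in> closure_ops"
  shows "clo_join f g = Moore_closure (fixpts f \<inter> fixpts g)"
  unfolding clo_join_def
proof (rule Least_equality)
  note h = Moore_closure[OF Moore_family_fixpts_inter[OF f g]]
  show "Moore_closure (fixpts f \<inter> fixpts g) \<in> closure_ops \<and>
      f \<le> Moore_closure (fixpts f \<inter> fixpts g) \<and> g \<le> Moore_closure (fixpts f \<inter> fixpts g)"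
    using h closure_ops_le_iff_fixpts f g by auto
  fix k assume "k \<in> closure_ops \<and> f \<le> k \<and> g \<le> k"
  then show "Moore_closure (fixpts f \<inter> fixpts g) \<le> k"
    using h closure_ops_le_iff_fixpts f g by (metis le_inf_iff)
qed

lemma S_set_iff:
  assumes f: "f \<in> closure_ops"
  shows "s \<in> S_set f \<longleftrightarrow> s \<in> closure_ops \<and> fixpts f \<inter> fixpts s = {top}"
proof -
  have "one_op \<in> closure_ops" "fixpts one_op = {top}"
    by (auto simp: closure_ops_def one_op_def fixpts_def)
  then have "clo_join f s = one_op \<longleftrightarrow> fixpts f \<inter> fixpts s = {top}" if "s \<in> closure_ops"
    using clo_join_eq_Moore_closure[OF f that] Moore_closure[OF Moore_family_fixpts_inter[OF f that]]
    by (metis closure_ops_eqI)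
  then show ?thesis by (auto simp: S_set_def)
qed

lemma Moore_family_complement_fixpts:
  "prime_op g \<Longrightarrow> Moore_family ((UNIV - fixpts g) \<union> {top})"
  by (auto simp: Moore_family_def prime_op_def)

lemma neg_op:
  assumes "prime_op g"
  shows "neg_op g \<in> closure_ops" "fixpts (neg_op g) = (UNIV - fixpts g) \<union> {top}"
  using theI'[OF closure_op_with_fixpts_unique[OF Moore_family_complement_fixpts[OF assms]]]
  by (simp_all add: neg_op_def)

lemma prime_neg_op:
  assumes "g \<in> closure_ops" "prime_op g"
  shows "prime_op (neg_op g)"
  using fixpts_closure_op_Moore[OF assms(1)]
  by (auto simp: prime_op_def neg_op(2)[OF assms(2)] Moore_family_def)

lemma neg_op_neg_op:
  assumes "g \<in> closure_ops" "prime_op g"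
  shows "neg_op (neg_op g) = g"
  using neg_op[OF prime_neg_op[OF assms]] neg_op[OF assms(2)] top_in_fixpts[OF assms(1)]
  by (intro closure_ops_eqI[OF _ assms(1)]) auto

lemma neg_op_antitone_iff:
  assumes "g \<in> closure_ops" "prime_op g" "h \<in> closure_ops" "prime_op h"
  shows "g \<le> h \<longleftrightarrow> neg_op h \<le> neg_op g"
  using top_in_fixpts[OF assms(1)] top_in_fixpts[OF assms(3)]
  by (auto simp: closure_ops_le_iff_fixpts assms neg_op[OF assms(2)] neg_op[OF assms(4)])

lemma neg_op_in_W_set_iff:
  assumes f: "f \<in> closure_ops" and s: "s \<in> closure_ops" "prime_op s"
  shows "neg_op s \<in> W_set f \<longleftrightarrow> s \<in> S_set f"
  using top_in_fixpts[OF f] top_in_fixpts[OF s(1)] prime_neg_op[OF s] neg_op[OF s(2)]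
  by (auto simp: W_set_def S_set_iff[OF f] closure_ops_le_iff_fixpts[OF _ f] s)

lemma bij_betw_neg_op_prime_S_set_W_set:
  assumes f: "f \<in> closure_ops"
  shows "bij_betw neg_op {s \<in> S_set f. prime_op s} (W_set f)"
proof (rule bij_betw_byWitness[where f' = neg_op])
  show "\<forall>s\<in>{s \<in> S_set f. prime_op s}. neg_op (neg_op s) = s"
    using neg_op_neg_op by (auto simp: S_set_def)
  show "\<forall>w\<in>W_set f. neg_op (neg_op w) = w"
    using neg_op_neg_op by (auto simp: W_set_def)
  show "neg_op ` {s \<in> S_set f. prime_op s} \<subseteq> W_set f"
    using neg_op_in_W_set_iff[OF f] by (auto simp: S_set_def)
  show "neg_op ` W_set f \<subseteq> {s \<in> S_set f. prime_op s}"
  proof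
    fix s assume "s \<in> neg_op ` W_set f"
    then obtain w where w: "w \<in> W_set f" "s = neg_op w" by blast
    then have "w \<in> closure_ops" "prime_op w" by (auto simp: W_set_def)
    then show "s \<in> {s \<in> S_set f. prime_op s}"
      using w neg_op_in_W_set_iff[OF f] neg_op prime_neg_op neg_op_neg_op by fastforce
  qed
qed

lemma Moore_family_adjoin_meets:
  assumes "Moore_family M"
  shows "Moore_family (M \<union> inf a ` M)"
proof -
  have "inf x y \<in> M \<union> inf a ` M" if "x \<in> M \<union> inf a ` M" "y \<in> M \<union> inf a ` M" for x y
  proof -
    have closed: "u \<in> M \<Longrightarrow> v \<in> M \<Longrightarrow> inf u v \<in> M" for u v
      using assms by (simp add: Moore_family_def)
    from that consider "x \<in> M" "y \<in> M" | m where "m \<in> M" "inf x y = inf a (inf m y)" "y \<in> M"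
      | m where "m \<in> M" "inf x y = inf a (inf x m)" "x \<in> M"
      | m m' where "m \<in> M" "m' \<in> M" "inf x y = inf a (inf m m')"
      by (auto simp: inf_aci)
    then show ?thesis using closed by cases auto
  qed
  then show ?thesis using assms by (auto simp: Moore_family_def)
qed

lemma minimal_S_set_witness:
  assumes f: "f \<in> closure_ops" and s: "s \<in> minimals (S_set f)" and a: "a \<notin> fixpts s"
  obtains m where "m \<in> fixpts s" "inf a m \<in> fixpts f" "inf a m \<noteq> top"
proof -
  let ?N = "fixpts s \<union> inf a ` fixpts s"
  have s_cl: "s \<in> closure_ops" and s_disj: "fixpts f \<inter> fixpts s = {top}"
    using s S_set_iff[OF f] by (auto simp: minimals_def)
  note N = Moore_closure[OF Moore_family_adjoin_meets[OF fixpts_closure_op_Moore[OF s_cl]]]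
  have "Moore_closure ?N \<le> s" using N closure_ops_le_iff_fixpts[OF N(1) s_cl] by auto
  moreover have "a \<in> ?N" using top_in_fixpts[OF s_cl] by (metis UnI2 image_eqI inf_top_right)
  then have "Moore_closure ?N \<noteq> s" using N(2) a by force
  ultimately have "Moore_closure ?N \<notin> S_set f" using s by (auto simp: minimals_def)
  then have "fixpts f \<inter> ?N \<noteq> {top}" using S_set_iff[OF f] N top_in_fixpts[OF f] by auto
  then obtain x where "x \<in> fixpts f" "x \<in> ?N" "x \<noteq> top"
    using top_in_fixpts[OF f] top_in_fixpts[OF s_cl] by blast
  moreover have "x \<notin> fixpts s" using s_disj \<open>x \<in> fixpts f\<close> \<open>x \<noteq> top\<close> by blast
  ultimately show thesis using that by blast
qed

lemma minimal_S_set_prime: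
  assumes f: "f \<in> closure_ops" and s: "s \<in> minimals (S_set f)"
  shows "prime_op s"
  unfolding prime_op_def
proof (intro allI impI notI)
  fix a b assume a: "a \<notin> fixpts s" and b: "b \<notin> fixpts s" and ab: "inf a b \<in> fixpts s"
  have s_cl: "s \<in> closure_ops" and s_disj: "fixpts f \<inter> fixpts s = {top}"
    using s S_set_iff[OF f] by (auto simp: minimals_def)
  obtain m where m: "m \<in> fixpts s" "inf a m \<in> fixpts f" "inf a m \<noteq> top"
    using minimal_S_set_witness[OF f s a] .
  obtain m' where m': "m' \<in> fixpts s" "inf b m' \<in> fixpts f"
    using minimal_S_set_witness[OF f s b] .
  let ?x = "inf (inf a m) (inf b m')"
  have "?x = inf (inf a b) (inf m m')" by (simp add: inf_aci)
  then have "?x \<in> fixpts s"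
    using fixpts_closure_op_Moore[OF s_cl] ab m(1) m'(1) by (simp add: Moore_family_def)
  moreover have "?x \<in> fixpts f"
    using fixpts_closure_op_Moore[OF f] m(2) m'(2) by (simp add: Moore_family_def)
  ultimately have "?x = top" using s_disj by blast
  then show False using m(3) by simp
qed

theorem mainTheorem15:
  fixes f :: "'a::{finite,bounded_lattice} \<Rightarrow> 'a"
  assumes "f \<in> closure_ops"
  shows "bij_betw neg_op (minimals (S_set f)) (maximals (W_set f))"
proof -
  have "minimals {s \<in> S_set f. prime_op s} = minimals (S_set f)"
    using minimal_S_set_prime[OF assms]
    by (intro minimals_eq_if_minimals_subset) (auto simp: minimals_def)
  moreover have "bij_betw neg_op (minimals {s \<in> S_set f. prime_op s}) (maximals (W_set f))"
    using bij_betw_neg_op_prime_S_set_W_set[OF assms] neg_op_antitone_iff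
    by (rule bij_betw_minimals_maximals) (auto simp: S_set_def)
  ultimately show ?thesis by simp
qed

end
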